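(* Consider the parametrized system described in the context, assume $m_x\ge m_\xi$, and let $\Gamma\in\mathbb{R}^{m_y\times m_\xi}$ be a given right tangential interpolation matrix at $(\Xi,\Pi)$. Then a value $\theta\in\mathbf\Theta$ is consistent with $\Gamma$ if and only if the equation $$\begin{bmatrix}A(\theta)&B(\theta)\\ C(\theta)&D(\theta)\end{bmatrix}\begin{bmatrix}T_1\\ \Pi\end{bmatrix}=\begin{bmatrix}T_1\Xi\\ \Gamma\end{bmatrix}$$ has a solution $T_1\in\mathbb{R}^{m_x\times m_\xi}$ of full column rank.
   Context: Integers $m_x,m_u,m_y,m_v,m_z,m_\theta,m_\xi\ge 1$ are given, together with real matrices $A_{xx}\in\mathbb{R}^{m_x\times m_x}$, $B_{xu}\in\mathbb{R}^{m_x\times m_u}$, $B_{xv}\in\mathbb{R}^{m_x\times m_v}$, $C_{yx}\in\mathbb{R}^{m_y\times m_x}$, $C_{zx}\in\mathbb{R}^{m_z\times m_x}$, $D_{zu}\in\mathbb{R}^{m_z\times m_u}$, $D_{zv}\in\mathbb{R}^{m_z\times m_v}$, $D_{yu}\in\mathbb{R}^{m_y\times m_u}$, $D_{yv}\in\mathbb{R}^{m_y\times m_v}$ and $P_0,\dots,P_{m_\theta}\in\mathbb{R}^{m_v\times m_z}$. For $\theta\in\mathbb{R}^{m_\theta}$ put $P(\theta)=P_0+\sum_{i=1}^{m_\theta}\theta_iP_i$ and $$\begin{bmatrix}A(\theta)&B(\theta)\\ C(\theta)&D(\theta)\end{bmatrix}=\begin{bmatrix}A_{xx}&B_{xu}\\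 C_{yx}&D_{yu}\end{bmatrix}+\begin{bmatrix}B_{xv}\\ D_{yv}\end{bmatrix}[I_{m_v}-P(\theta)D_{zv}]^{-1}P(\theta)\begin{bmatrix}C_{zx}&D_{zu}\end{bmatrix},$$ the system matrices of $\dot x=A(\theta)x+B(\theta)u$, $y=C(\theta)x+D(\theta)u$. A compact set $\mathbf{\Theta}\subset\mathbb{R}^{m_\theta}$ is given with $I_{m_v}-P(\theta)D_{zv}$ invertible for all $\theta\in\mathbf\Theta$. Matrices $\Xi\in\mathbb{R}^{m_\xi\times m_\xi}$, $\Pi\in\mathbb{R}^{m_u\times m_\xi}$ are given. A value $\theta$ is called consistent with $\Gamma$ if the system with matrices $A(\theta),B(\theta),C(\theta),D(\theta)$ matches $\Gamma$ in the following sense: there exist a nonsingular $T\in\mathbb{R}^{m_x\times m_x}$ and real matrices $G\in\mathbb{R}^{m_\xi\times m_u}$, $Z\in\mathbb{R}^{m_\xi\times(m_x-m_\xi)}$, $S\in\mathbb{R}^{(m_x-m_\xi)\times m_u}$, $F\in\mathbb{R}^{(m_x-m_\xi)\times(m_x-m_\xi)}$, $K\in\mathbb{R}^{m_y\times m_u}$, $H\in\mathbb{R}^{m_y\times(m_x-m_\xi)}$ with $$\begin{bmatrix}A(\theta)&B(\theta)\\ C(\theta)&D(\theta)\end{bmatrix}=\begin{bmatrix}T&0\\0&I_{m_y}\end{bmatrix}\begin{bmatrix}\Xi-G\Pi&Z&G\\ -S\Pi&F&S\\ \Gamma-K\Pi&H&K\end{bmatrix}\begin{bmatrix}T^{-1}&0\\0&I_{m_u}\end{bmatrix}.$$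 *)

theory Defs
  imports "HOL-Analysis.Function_Topology" "Jordan_Normal_Form.DL_Rank"
begin

definition hcat :: "real mat \<Rightarrow> real mat \<Rightarrow> real mat" where
  "hcat A B = four_block_mat A B (0\<^sub>m 0 (dim_col A)) (0\<^sub>m 0 (dim_col B))"

text \<open>The (two-sided) inverse of a square matrix (meaningful when it is invertible).\<close>
definition minv :: "real mat \<Rightarrow> real mat" where
  "minv M = (SOME N. inverts_mat M N \<and> inverts_mat N M)"

fun Ptheta :: "(nat \<Rightarrow> real mat) \<Rightarrow> nat \<Rightarrow> (nat \<Rightarrow> real) \<Rightarrow> real mat" where
  "Ptheta P 0 \<theta> = P 0"
| "Ptheta P (Suc k) \<theta> = Ptheta P k \<theta> + \<theta> (Suc k) \<cdot>\<^sub>m P (Suc k)"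

text \<open>The block system matrix [A(theta) B(theta); C(theta) D(theta)].\<close>
definition sys_mat ::
  "real mat \<Rightarrow> real mat \<Rightarrow> real mat \<Rightarrow> real mat \<Rightarrow> real mat \<Rightarrow> real mat \<Rightarrow> real mat
   \<Rightarrow> real mat \<Rightarrow> real mat \<Rightarrow> nat \<Rightarrow> (nat \<Rightarrow> real mat) \<Rightarrow> nat \<Rightarrow> (nat \<Rightarrow> real) \<Rightarrow> real mat" where
  "sys_mat Axx Bxu Bxv Cyx Czx Dzu Dzv Dyu Dyv mv P m\<theta> \<theta> =
     four_block_mat Axx Bxu Cyx Dyu
     + (Bxv @\<^sub>r Dyv) * minv (1\<^sub>m mv - Ptheta P m\<theta> \<theta> * Dzv) * Ptheta P m\<theta> \<theta> * hcat Czx Dzu"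

definition consistent ::
  "real mat \<Rightarrow> nat \<Rightarrow> nat \<Rightarrow> nat \<Rightarrow> nat \<Rightarrow> real mat \<Rightarrow> real mat \<Rightarrow> real mat \<Rightarrow> bool" where
  "consistent M mx mu my m\<xi> \<Xi> PiM \<Gamma> \<longleftrightarrow>
    (\<exists>T G Z S F K H.
       T \<in> carrier_mat mx mx \<and> invertible_mat T \<and>
       G \<in> carrier_mat m\<xi> mu \<and> Z \<in> carrier_mat m\<xi> (mx - m\<xi>) \<and>
       S \<in> carrier_mat (mx - m\<xi>) mu \<and> F \<in> carrier_mat (mx - m\<xi>) (mx - m\<xi>) \<and>
       K \<in> carrier_mat my mu \<and> H \<in> carrier_mat my (mx - m\<xi>) \<and>
       M = four_block_mat T (0\<^sub>m mx my) (0\<^sub>m my mx) (1\<^sub>m my)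
           * four_block_mat
               (four_block_mat (\<Xi> - G * PiM) Z (- (S * PiM)) F)
               (G @\<^sub>r S)
               (hcat (\<Gamma> - K * PiM) H)
               K
           * four_block_mat (minv T) (0\<^sub>m mx mu) (0\<^sub>m mu mx) (1\<^sub>m mu))"

end

theory Submission
  imports Defs
begin

(* Write E = [I; 0] for the inclusion of the first m_xi coordinates into R^m_x.  A block matrix
   N = [N11 N12 G; N21 N22 S; N31 N32 K] has the shape
   [Xi - G Pi, Z, G; -S Pi, F, S; Gamma - K Pi, H, K] exactly when N [E; Pi] = [E Xi; Gamma],
   since that equation pins down precisely the first block column.  Conjugating by diag(T, I),
   consistency therefore says M [T E; Pi] = [T E Xi; Gamma] for some invertible T; and the
   products T E with T invertible are exactly the m_x x m_xi matrices T_1 of full column rank,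
   because linearly independent columns extend to a basis. *)

lemma minv_mat:
  assumes T: "T \<in> carrier_mat n n" and inv: "invertible_mat T"
  shows minv_carrier_mat: "minv T \<in> carrier_mat n n"
    and mult_minv_mat: "T * minv T = 1\<^sub>m n"
    and minv_mult_mat: "minv T * T = 1\<^sub>m n"
proof -
  have "\<exists>N. inverts_mat T N \<and> inverts_mat N T" using inv unfolding invertible_mat_def by blast
  then have inverts: "inverts_mat T (minv T)" "inverts_mat (minv T) T"
    unfolding minv_def by (rule someI_ex[THEN conjunct1], rule someI_ex[THEN conjunct2])
  then show right: "T * minv T = 1\<^sub>m n" using T unfolding inverts_mat_def by auto
  have "minv T * T = 1\<^sub>m (dim_row (minv T))" using inverts(2) unfolding inverts_mat_def .
  moreover have "dim_row (minv T) = n" "dim_col (minv T) = n"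
    using arg_cong[OF calculation, of dim_col] arg_cong[OF right, of dim_col] T by auto
  ultimately show "minv T \<in> carrier_mat n n" "minv T * T = 1\<^sub>m n" by auto
qed

lemma invertible_mat_if_det_nonzero:
  assumes T: "(T :: 'a :: field mat) \<in> carrier_mat n n" and "det T \<noteq> 0"
  shows "invertible_mat T"
proof -
  have "T \<in> Units (ring_mat TYPE('a) n ())" by (rule det_non_zero_imp_unit[OF T \<open>det T \<noteq> 0\<close>])
  then obtain B where "B \<in> carrier_mat n n" "B * T = 1\<^sub>m n" "T * B = 1\<^sub>m n"
    unfolding Units_def ring_mat_def by auto
  then show ?thesis unfolding invertible_mat_def inverts_mat_def using T by auto
qed

lemma mult_left_cancel_mat:
  fixes A :: "'a :: semiring_1 mat"
  assumes A: "A \<in> carrier_mat n n" "A' \<in> carrier_mat n n" "A' * A = 1\<^sub>m n"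
    and Y: "Y \<in> carrier_mat n c" and Z: "Z \<in> carrier_mat n c"
  shows "A * Y = A * Z \<longleftrightarrow> Y = Z"
proof
  assume eq: "A * Y = A * Z"
  have "Y = (A' * A) * Y" using A Y by simp
  also have "\<dots> = A' * (A * Y)" by (rule assoc_mult_mat[OF A(2) A(1) Y])
  also have "\<dots> = (A' * A) * Z" unfolding eq by (rule assoc_mult_mat[OF A(2) A(1) Z, symmetric])
  also have "\<dots> = Z" using A Z by simp
  finally show "Y = Z" .
qed simp

lemma conjugate_eq_iff:
  fixes M :: "'a :: semiring_1 mat"
  assumes A: "A \<in> carrier_mat m m" "A' \<in> carrier_mat m m" "A * A' = 1\<^sub>m m" "A' * A = 1\<^sub>m m"
    and B: "B \<in> carrier_mat n n" "B' \<in> carrier_mat n n" "B * B' = 1\<^sub>m n" "B' * B = 1\<^sub>m n"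
    and M: "M \<in> carrier_mat m n" and N: "N \<in> carrier_mat m n"
  shows "M = A * N * B \<longleftrightarrow> A' * M * B' = N"
proof
  assume M_eq: "M = A * N * B"
  have "A' * M = A' * (A * (N * B))" unfolding M_eq using A N B by simp
  also have "\<dots> = (A' * A) * (N * B)"
    using assoc_mult_mat[OF A(2) A(1) mult_carrier_mat[OF N B(1)]] by (rule sym)
  finally have "A' * M * B' = N * B * B'" using A N B by simp
  then show "A' * M * B' = N" using B N by simp
next
  assume N_eq: "A' * M * B' = N"
  have "A * N = A * (A' * (M * B'))" unfolding N_eq[symmetric] using A M B by simp
  also have "\<dots> = (A * A') * (M * B')"
    using assoc_mult_mat[OF A(1) A(2) mult_carrier_mat[OF M B(2)]] by (rule sym)
  finally have "A * N * B = M * B' * B" using A M B by simp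
  then show "M = A * N * B" using B M by simp
qed

lemma add_mat_eq_iff_eq_minus:
  fixes A B C :: "'a :: ab_group_add mat"
  assumes "A \<in> carrier_mat nr nc" "B \<in> carrier_mat nr nc" "C \<in> carrier_mat nr nc"
  shows "A + B = C \<longleftrightarrow> A = C - B"
  using assms by (auto intro!: eq_matI)

lemma minus_add_cancel_mat:
  fixes A B :: "'a :: group_add mat"
  assumes "A \<in> carrier_mat nr nc" "B \<in> carrier_mat nr nc"
  shows "A - B + B = A"
  using assms by (auto intro!: eq_matI)

lemma mat_eq_zero_if_no_cols: "A \<in> carrier_mat nr 0 \<Longrightarrow> A = 0\<^sub>m nr 0"
  by (rule eq_matI) auto

lemma mat_eq_zero_if_no_rows: "A \<in> carrier_mat 0 nc \<Longrightarrow> A = 0\<^sub>m 0 nc"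
  by (rule eq_matI) auto

lemma four_block_mat_degenerate:
  assumes "X \<in> carrier_mat a c" "Y \<in> carrier_mat a 0" "W \<in> carrier_mat 0 c" "Z \<in> carrier_mat 0 0"
  shows "four_block_mat X Y W Z = X"
  by (rule eq_matI) (insert assms, auto)

lemma append_rows_dims[simp]:
  "dim_row (A @\<^sub>r B) = dim_row A + dim_row B" "dim_col (A @\<^sub>r B) = dim_col A"
  by (simp_all add: append_rows_def)

lemma append_rows_index:
  assumes "i < dim_row A + dim_row B" "j < dim_col A" "dim_col B = dim_col A"
  shows "(A @\<^sub>r B) $$ (i, j) = (if i < dim_row A then A $$ (i, j) else B $$ (i - dim_row A, j))"
  using assms unfolding append_rows_def by auto

lemma append_rows_mult:
  assumes A: "A \<in> carrier_mat a m" and B: "B \<in> carrier_mat b m" and C: "C \<in> carrier_mat m c"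
  shows "(A @\<^sub>r B) * C = (A * C) @\<^sub>r (B * C)"
proof -
  have "(A @\<^sub>r B) * C
      = four_block_mat A (0\<^sub>m a 0) B (0\<^sub>m b 0) * four_block_mat C (0\<^sub>m m 0) (0\<^sub>m 0 c) (0\<^sub>m 0 0)"
    using A B C by (simp add: append_rows_def four_block_mat_degenerate)
  also have "\<dots> = four_block_mat (A * C + 0\<^sub>m a 0 * 0\<^sub>m 0 c) (A * 0\<^sub>m m 0 + 0\<^sub>m a 0 * 0\<^sub>m 0 0)
     (B * C + 0\<^sub>m b 0 * 0\<^sub>m 0 c) (B * 0\<^sub>m m 0 + 0\<^sub>m b 0 * 0\<^sub>m 0 0)"
    by (rule mult_four_block_mat) (insert A B C, auto)
  also have "\<dots> = (A * C) @\<^sub>r (B * C)"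
    unfolding append_rows_def using A B C by (intro cong_four_block_mat) auto
  finally show ?thesis .
qed

lemma append_rows_add:
  assumes "A \<in> carrier_mat a c" "B \<in> carrier_mat b c" "C \<in> carrier_mat a c" "D \<in> carrier_mat b c"
  shows "(A @\<^sub>r B) + (C @\<^sub>r D) = (A + C) @\<^sub>r (B + D)"
proof (rule eq_matI)
  fix i j assume "i < dim_row ((A + C) @\<^sub>r (B + D))" "j < dim_col ((A + C) @\<^sub>r (B + D))"
  then have "i < a + b" "j < c" using assms by auto
  then show "((A @\<^sub>r B) + (C @\<^sub>r D)) $$ (i, j) = ((A + C) @\<^sub>r (B + D)) $$ (i, j)"
    using assms by (simp add: append_rows_index)
qed (use assms in auto)

lemma append_rows_eq_iff:
  assumes "A \<in> carrier_mat a c" "B \<in> carrier_mat b c" "C \<in> carrier_mat a c" "D \<in> carrier_mat b c"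
  shows "A @\<^sub>r B = C @\<^sub>r D \<longleftrightarrow> A = C \<and> B = D"
proof
  assume eq: "A @\<^sub>r B = C @\<^sub>r D"
  have "A $$ (i, j) = C $$ (i, j)" if "i < a" "j < c" for i j
    using arg_cong[OF eq, of "\<lambda>X. X $$ (i, j)"] that assms by (simp add: append_rows_index)
  moreover have "B $$ (i, j) = D $$ (i, j)" if "i < b" "j < c" for i j
    using arg_cong[OF eq, of "\<lambda>X. X $$ (i + a, j)"] that assms by (simp add: append_rows_index)
  ultimately show "A = C \<and> B = D" using assms by (auto intro!: eq_matI)
qed simp

lemma hcat_carrier_mat[simp]:
  "A \<in> carrier_mat a b1 \<Longrightarrow> B \<in> carrier_mat a b2 \<Longrightarrow> hcat A B \<in> carrier_mat a (b1 + b2)"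
  unfolding hcat_def by auto

lemma hcat_mult_append_rows:
  assumes A: "A \<in> carrier_mat a b1" and B: "B \<in> carrier_mat a b2"
    and C: "C \<in> carrier_mat b1 c" and D: "D \<in> carrier_mat b2 c"
  shows "hcat A B * (C @\<^sub>r D) = A * C + B * D"
proof -
  have "hcat A B * (C @\<^sub>r D)
      = four_block_mat A B (0\<^sub>m 0 b1) (0\<^sub>m 0 b2) * four_block_mat C (0\<^sub>m b1 0) D (0\<^sub>m b2 0)"
    using A B C D by (simp add: append_rows_def hcat_def)
  also have "\<dots> = four_block_mat (A * C + B * D) (A * 0\<^sub>m b1 0 + B * 0\<^sub>m b2 0)
     (0\<^sub>m 0 b1 * C + 0\<^sub>m 0 b2 * D) (0\<^sub>m 0 b1 * 0\<^sub>m b1 0 + 0\<^sub>m 0 b2 * 0\<^sub>m b2 0)"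
    by (rule mult_four_block_mat) (insert A B C D, auto)
  also have "\<dots> = A * C + B * D"
    by (rule four_block_mat_degenerate) (insert A B C D, auto)
  finally show ?thesis .
qed

lemma mat_of_cols_append: "mat_of_cols n (xs @ ys) = hcat (mat_of_cols n xs) (mat_of_cols n ys)"
  by (rule eq_matI) (auto simp: hcat_def mat_of_cols_index nth_append)

definition block_diag_id :: "'a :: semiring_1 mat \<Rightarrow> nat \<Rightarrow> nat \<Rightarrow> 'a mat" where
  "block_diag_id T n m = four_block_mat T (0\<^sub>m n m) (0\<^sub>m m n) (1\<^sub>m m)"

lemma block_diag_id_carrier[simp]:
  "T \<in> carrier_mat n n \<Longrightarrow> block_diag_id T n m \<in> carrier_mat (n + m) (n + m)"
  unfolding block_diag_id_def by auto

lemma block_diag_id_mult_append_rows: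
  assumes T: "T \<in> carrier_mat n n" and X: "X \<in> carrier_mat n c" and Y: "Y \<in> carrier_mat m c"
  shows "block_diag_id T n m * (X @\<^sub>r Y) = (T * X) @\<^sub>r Y"
proof -
  have "block_diag_id T n m * (X @\<^sub>r Y)
      = four_block_mat T (0\<^sub>m n m) (0\<^sub>m m n) (1\<^sub>m m) * four_block_mat X (0\<^sub>m n 0) Y (0\<^sub>m m 0)"
    using X Y by (simp add: append_rows_def block_diag_id_def)
  also have "\<dots> = four_block_mat (T * X + 0\<^sub>m n m * Y) (T * 0\<^sub>m n 0 + 0\<^sub>m n m * 0\<^sub>m m 0)
     (0\<^sub>m m n * X + 1\<^sub>m m * Y) (0\<^sub>m m n * 0\<^sub>m n 0 + 1\<^sub>m m * 0\<^sub>m m 0)"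
    by (rule mult_four_block_mat) (insert T X Y, auto)
  also have "\<dots> = (T * X) @\<^sub>r Y"
    unfolding append_rows_def using T X Y by (intro cong_four_block_mat) auto
  finally show ?thesis .
qed

lemma block_diag_id_mult:
  assumes A: "A \<in> carrier_mat n n" and B: "B \<in> carrier_mat n n"
  shows "block_diag_id A n m * block_diag_id B n m = block_diag_id (A * B) n m"
proof -
  have "block_diag_id A n m * block_diag_id B n m
      = four_block_mat (A * B + 0\<^sub>m n m * 0\<^sub>m m n) (A * 0\<^sub>m n m + 0\<^sub>m n m * 1\<^sub>m m)
          (0\<^sub>m m n * B + 1\<^sub>m m * 0\<^sub>m m n) (0\<^sub>m m n * 0\<^sub>m n m + 1\<^sub>m m * 1\<^sub>m m)"
    unfolding block_diag_id_def by (rule mult_four_block_mat) (insert A B, auto)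
  also have "\<dots> = block_diag_id (A * B) n m"
    unfolding block_diag_id_def using A B by (intro cong_four_block_mat) auto
  finally show ?thesis .
qed

lemma block_diag_id_minv:
  assumes T: "T \<in> carrier_mat n n" and inv: "invertible_mat T"
  shows "block_diag_id T n m * block_diag_id (minv T) n m = 1\<^sub>m (n + m)"
    and "block_diag_id (minv T) n m * block_diag_id T n m = 1\<^sub>m (n + m)"
  using block_diag_id_mult[OF T minv_carrier_mat[OF T inv]]
    block_diag_id_mult[OF minv_carrier_mat[OF T inv] T]
  by (simp_all add: mult_minv_mat[OF T inv] minv_mult_mat[OF T inv] block_diag_id_def)

definition inclusion_mat :: "nat \<Rightarrow> nat \<Rightarrow> 'a :: semiring_1 mat" where
  "inclusion_mat k r = 1\<^sub>m k @\<^sub>r 0\<^sub>m r k"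

lemma inclusion_mat_dims[simp]:
  "dim_row (inclusion_mat k r) = k + r" "dim_col (inclusion_mat k r) = k"
  unfolding inclusion_mat_def by auto

lemma inclusion_mat_carrier[simp]: "inclusion_mat k r \<in> carrier_mat (k + r) k"
  by (simp add: carrier_matI)

lemma inclusion_mat_mult:
  "X \<in> carrier_mat k c \<Longrightarrow> inclusion_mat k r * X = X @\<^sub>r 0\<^sub>m r c"
  unfolding inclusion_mat_def by (simp add: append_rows_mult[of _ k k _ r])

lemma inclusion_mat_mult_vec:
  "v \<in> carrier_vec k \<Longrightarrow> inclusion_mat k r *\<^sub>v v = v @\<^sub>v 0\<^sub>v r"
  unfolding inclusion_mat_def by (subst mat_mult_append) auto

lemma hcat_mult_inclusion_mat:
  assumes "A \<in> carrier_mat a k" and "B \<in> carrier_mat a r"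
  shows "hcat A B * inclusion_mat k r = A"
  using hcat_mult_append_rows[OF assms, of "1\<^sub>m k" k "0\<^sub>m r k"] assms
  by (simp add: inclusion_mat_def)

lemma four_block_mat_mult_inclusion_mat:
  assumes "N11 \<in> carrier_mat k k" "N12 \<in> carrier_mat k r"
    and "N21 \<in> carrier_mat r k" "N22 \<in> carrier_mat r r"
  shows "four_block_mat N11 N12 N21 N22 * inclusion_mat k r = N11 @\<^sub>r N21"
proof -
  have "four_block_mat N11 N12 N21 N22 * inclusion_mat k r
     = four_block_mat N11 N12 N21 N22 * four_block_mat (1\<^sub>m k) (0\<^sub>m k 0) (0\<^sub>m r k) (0\<^sub>m r 0)"
    unfolding inclusion_mat_def append_rows_def by simp
  also have "\<dots> = four_block_mat (N11 * 1\<^sub>m k + N12 * 0\<^sub>m r k) (N11 * 0\<^sub>m k 0 + N12 * 0\<^sub>m r 0)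
      (N21 * 1\<^sub>m k + N22 * 0\<^sub>m r k) (N21 * 0\<^sub>m k 0 + N22 * 0\<^sub>m r 0)"
    by (rule mult_four_block_mat) (insert assms, auto)
  also have "\<dots> = N11 @\<^sub>r N21"
    unfolding append_rows_def using assms by (intro cong_four_block_mat) auto
  finally show ?thesis .
qed

lemma block_3x3_mult_inclusion_append_rows:
  assumes N11: "N11 \<in> carrier_mat k k" and N12: "N12 \<in> carrier_mat k r"
    and N21: "N21 \<in> carrier_mat r k" and N22: "N22 \<in> carrier_mat r r"
    and G: "G \<in> carrier_mat k q" and S: "S \<in> carrier_mat r q"
    and N31: "N31 \<in> carrier_mat p k" and N32: "N32 \<in> carrier_mat p r"
    and K: "K \<in> carrier_mat p q" and PiM: "PiM \<in> carrier_mat q k"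
  shows "four_block_mat (four_block_mat N11 N12 N21 N22) (G @\<^sub>r S) (hcat N31 N32) K
           * (inclusion_mat k r @\<^sub>r PiM)
         = ((N11 + G * PiM) @\<^sub>r (N21 + S * PiM)) @\<^sub>r (N31 + K * PiM)"
proof -
  let ?N1 = "four_block_mat N11 N12 N21 N22" and ?E = "inclusion_mat k r :: real mat"
  have N1: "?N1 \<in> carrier_mat (k + r) (k + r)" using N11 N22 by auto
  have GS: "G @\<^sub>r S \<in> carrier_mat (k + r) q" using G S by auto
  have H: "hcat N31 N32 \<in> carrier_mat p (k + r)" using N31 N32 by auto
  have "four_block_mat ?N1 (G @\<^sub>r S) (hcat N31 N32) K * (?E @\<^sub>r PiM)
    = four_block_mat ?N1 (G @\<^sub>r S) (hcat N31 N32) K * four_block_mat ?E (0\<^sub>m (k + r) 0) PiM (0\<^sub>m q 0)"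
    unfolding append_rows_def using PiM by simp
  also have "\<dots> = four_block_mat (?N1 * ?E + (G @\<^sub>r S) * PiM) (?N1 * 0\<^sub>m (k + r) 0 + (G @\<^sub>r S) * 0\<^sub>m q 0)
     (hcat N31 N32 * ?E + K * PiM) (hcat N31 N32 * 0\<^sub>m (k + r) 0 + K * 0\<^sub>m q 0)"
    by (rule mult_four_block_mat[OF N1 GS H K]) (insert PiM, auto)
  also have "?N1 * ?E = N11 @\<^sub>r N21" by (rule four_block_mat_mult_inclusion_mat[OF N11 N12 N21 N22])
  also have "(G @\<^sub>r S) * PiM = (G * PiM) @\<^sub>r (S * PiM)" by (rule append_rows_mult[OF G S PiM])
  also have "(N11 @\<^sub>r N21) + ((G * PiM) @\<^sub>r (S * PiM)) = (N11 + G * PiM) @\<^sub>r (N21 + S * PiM)"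
    by (rule append_rows_add) (insert N11 N21 G S PiM, auto)
  also have "hcat N31 N32 * ?E = N31" by (rule hcat_mult_inclusion_mat[OF N31 N32])
  also have "?N1 * 0\<^sub>m (k + r) 0 + (G @\<^sub>r S) * 0\<^sub>m q 0 = 0\<^sub>m (k + r) 0"
    by (rule mat_eq_zero_if_no_cols) (insert N1 GS, auto)
  also have "hcat N31 N32 * 0\<^sub>m (k + r) 0 + K * 0\<^sub>m q 0 = 0\<^sub>m p 0"
    by (rule mat_eq_zero_if_no_cols) (insert H K, auto)
  finally show ?thesis
    unfolding append_rows_def using N11 N21 G S PiM N31 K by simp
qed

lemma block_3x3_decomposition:
  assumes N: "N \<in> carrier_mat (k + r + p) (k + r + q)"
  obtains N11 N12 N21 N22 G S N31 N32 K where
    "N11 \<in> carrier_mat k k" "N12 \<in> carrier_mat k r" "N21 \<in> carrier_mat r k" "N22 \<in> carrier_mat r r"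
    "G \<in> carrier_mat k q" "S \<in> carrier_mat r q"
    "N31 \<in> carrier_mat p k" "N32 \<in> carrier_mat p r" "K \<in> carrier_mat p q"
    "N = four_block_mat (four_block_mat N11 N12 N21 N22) (G @\<^sub>r S) (hcat N31 N32) K"
proof -
  obtain N1 N2 N3 K where "split_block N (k + r) (k + r) = (N1, N2, N3, K)"
    by (metis prod_cases4)
  note split = split_block[OF this, of p q]
  have N1: "N1 \<in> carrier_mat (k + r) (k + r)" and N2: "N2 \<in> carrier_mat (k + r) q"
    and N3: "N3 \<in> carrier_mat p (k + r)" and K: "K \<in> carrier_mat p q"
    and N_eq: "N = four_block_mat N1 N2 N3 K" using split N by auto
  obtain N11 N12 N21 N22 where "split_block N1 k k = (N11, N12, N21, N22)"
    by (metis prod_cases4)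
  note split1 = split_block[OF this, of r r]
  obtain G X S Y where "split_block N2 k q = (G, X, S, Y)" by (metis prod_cases4)
  note split2 = split_block[OF this, of r 0]
  obtain N31 N32 W1 W2 where "split_block N3 p k = (N31, N32, W1, W2)" by (metis prod_cases4)
  note split3 = split_block[OF this, of 0 r]
  have G: "G \<in> carrier_mat k q" and S: "S \<in> carrier_mat r q" and "N2 = G @\<^sub>r S"
    using split2 N2 mat_eq_zero_if_no_cols[of X k] mat_eq_zero_if_no_cols[of Y r]
    by (auto simp: append_rows_def)
  moreover have N31: "N31 \<in> carrier_mat p k" and N32: "N32 \<in> carrier_mat p r"
    and "N3 = hcat N31 N32"
    using split3 N3 mat_eq_zero_if_no_rows[of W1 k] mat_eq_zero_if_no_rows[of W2 r]
    by (auto simp: hcat_def)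
  ultimately show thesis
    using that[of N11 N12 N21 N22 G S N31 N32 K] split1 N1 K unfolding N_eq by simp
qed

definition tangential_block_mat ::
  "real mat \<Rightarrow> real mat \<Rightarrow> real mat \<Rightarrow> real mat \<Rightarrow> real mat \<Rightarrow> real mat \<Rightarrow> real mat
    \<Rightarrow> real mat \<Rightarrow> real mat \<Rightarrow> real mat" where
  "tangential_block_mat \<Xi> PiM \<Gamma> G Z S F K H =
     four_block_mat (four_block_mat (\<Xi> - G * PiM) Z (- (S * PiM)) F) (G @\<^sub>r S) (hcat (\<Gamma> - K * PiM) H) K"

lemma tangential_block_mat_carrier:
  assumes "\<Xi> \<in> carrier_mat k k" "PiM \<in> carrier_mat q k" "\<Gamma> \<in> carrier_mat p k"
    and "G \<in> carrier_mat k q" "Z \<in> carrier_mat k r" "S \<in> carrier_mat r q" "F \<in> carrier_mat r r"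
    and "K \<in> carrier_mat p q" "H \<in> carrier_mat p r"
  shows "tangential_block_mat \<Xi> PiM \<Gamma> G Z S F K H \<in> carrier_mat (k + r + p) (k + r + q)"
  unfolding tangential_block_mat_def using assms by (auto intro!: four_block_carrier_mat)

lemma tangential_block_mat_mult_inclusion:
  assumes \<Xi>: "\<Xi> \<in> carrier_mat k k" and PiM: "PiM \<in> carrier_mat q k" and \<Gamma>: "\<Gamma> \<in> carrier_mat p k"
    and G: "G \<in> carrier_mat k q" and Z: "Z \<in> carrier_mat k r"
    and S: "S \<in> carrier_mat r q" and F: "F \<in> carrier_mat r r"
    and K: "K \<in> carrier_mat p q" and H: "H \<in> carrier_mat p r"
  shows "tangential_block_mat \<Xi> PiM \<Gamma> G Z S F K H * (inclusion_mat k r @\<^sub>r PiM)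
    = (inclusion_mat k r * \<Xi>) @\<^sub>r \<Gamma>"
proof -
  have "tangential_block_mat \<Xi> PiM \<Gamma> G Z S F K H * (inclusion_mat k r @\<^sub>r PiM)
      = ((\<Xi> - G * PiM + G * PiM) @\<^sub>r (- (S * PiM) + S * PiM)) @\<^sub>r (\<Gamma> - K * PiM + K * PiM)"
    unfolding tangential_block_mat_def
    by (rule block_3x3_mult_inclusion_append_rows) (use \<Xi> G Z S F \<Gamma> K H PiM in auto)
  also have "\<dots> = (inclusion_mat k r * \<Xi>) @\<^sub>r \<Gamma>"
    using \<Xi> G S \<Gamma> K PiM
    by (simp add: minus_add_cancel_mat uminus_l_inv_mat[OF mult_carrier_mat[OF S PiM]] inclusion_mat_mult)
  finally show ?thesis .
qed

lemma tangential_block_form_iff: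
  assumes N: "N \<in> carrier_mat (k + r + p) (k + r + q)" and \<Xi>: "\<Xi> \<in> carrier_mat k k"
    and PiM: "PiM \<in> carrier_mat q k" and \<Gamma>: "\<Gamma> \<in> carrier_mat p k"
  shows "(\<exists>G Z S F K H. G \<in> carrier_mat k q \<and> Z \<in> carrier_mat k r \<and> S \<in> carrier_mat r q \<and>
            F \<in> carrier_mat r r \<and> K \<in> carrier_mat p q \<and> H \<in> carrier_mat p r \<and>
            N = tangential_block_mat \<Xi> PiM \<Gamma> G Z S F K H)
     \<longleftrightarrow> N * (inclusion_mat k r @\<^sub>r PiM) = (inclusion_mat k r * \<Xi>) @\<^sub>r \<Gamma>"
    (is "?block_form \<longleftrightarrow> ?equation")
proof
  assume ?block_form
  then obtain G Z S F K H where blocks: "G \<in> carrier_mat k q" "Z \<in> carrier_mat k r"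
    "S \<in> carrier_mat r q" "F \<in> carrier_mat r r" "K \<in> carrier_mat p q" "H \<in> carrier_mat p r"
    and N_eq: "N = tangential_block_mat \<Xi> PiM \<Gamma> G Z S F K H"
    by blast
  show ?equation unfolding N_eq by (rule tangential_block_mat_mult_inclusion[OF \<Xi> PiM \<Gamma> blocks])
next
  assume eq: ?equation
  obtain N11 N12 N21 N22 G S N31 N32 K where
    N11: "N11 \<in> carrier_mat k k" and N12: "N12 \<in> carrier_mat k r"
    and N21: "N21 \<in> carrier_mat r k" and N22: "N22 \<in> carrier_mat r r"
    and G: "G \<in> carrier_mat k q" and S: "S \<in> carrier_mat r q"
    and N31: "N31 \<in> carrier_mat p k" and N32: "N32 \<in> carrier_mat p r" and K: "K \<in> carrier_mat p q"
    and N_eq: "N = four_block_mat (four_block_mat N11 N12 N21 N22) (G @\<^sub>r S) (hcat N31 N32) K"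
    using block_3x3_decomposition[OF N] by blast
  have "((N11 + G * PiM) @\<^sub>r (N21 + S * PiM)) @\<^sub>r (N31 + K * PiM) = (\<Xi> @\<^sub>r 0\<^sub>m r k) @\<^sub>r \<Gamma>"
    using eq unfolding N_eq inclusion_mat_mult[OF \<Xi>]
      block_3x3_mult_inclusion_append_rows[OF N11 N12 N21 N22 G S N31 N32 K PiM] .
  moreover have sums: "N11 + G * PiM \<in> carrier_mat k k" "N21 + S * PiM \<in> carrier_mat r k"
    "N31 + K * PiM \<in> carrier_mat p k" using N11 N21 N31 G S K PiM by auto
  ultimately have e1: "N11 + G * PiM = \<Xi>" and e2: "N21 + S * PiM = 0\<^sub>m r k"
    and e3: "N31 + K * PiM = \<Gamma>"
    using append_rows_eq_iff[OF carrier_append_rows[OF sums(1,2)] sums(3)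
        carrier_append_rows[OF \<Xi> zero_carrier_mat] \<Gamma>]
      append_rows_eq_iff[OF sums(1,2) \<Xi> zero_carrier_mat]
    by blast+
  have "N11 = \<Xi> - G * PiM"
    using e1 add_mat_eq_iff_eq_minus[OF N11 mult_carrier_mat[OF G PiM] \<Xi>] by blast
  moreover have "N21 = - (S * PiM)"
  proof -
    have "N21 = 0\<^sub>m r k - S * PiM"
      using e2 add_mat_eq_iff_eq_minus[OF N21 mult_carrier_mat[OF S PiM] zero_carrier_mat] by blast
    also have "\<dots> = - (S * PiM)" using S PiM by (auto intro!: eq_matI)
    finally show ?thesis .
  qed
  moreover have "N31 = \<Gamma> - K * PiM"
    using e3 add_mat_eq_iff_eq_minus[OF N31 mult_carrier_mat[OF K PiM] \<Gamma>] by blast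
  ultimately have "N = tangential_block_mat \<Xi> PiM \<Gamma> G N12 S N22 K N32"
    unfolding N_eq tangential_block_mat_def by simp
  then show ?block_form using G N12 S N22 K N32 by blast
qed

lemma mult_unit_vec_col:
  assumes "(A :: 'a :: semiring_1 mat) \<in> carrier_mat nr nc" and "i < nc"
  shows "A *\<^sub>v unit_vec nc i = col A i"
  by (rule eq_vecI) (use assms in auto)

lemma rank_eq_dim_col_if_kernel_trivial:
  fixes A :: "'a :: field mat"
  assumes A: "A \<in> carrier_mat n nc"
    and ker: "\<And>v. v \<in> carrier_vec nc \<Longrightarrow> A *\<^sub>v v = 0\<^sub>v n \<Longrightarrow> v = 0\<^sub>v nc"
  shows "vec_space.rank n A = nc"
proof -
  interpret vec_space "TYPE('a)" n .
  have dist: "distinct (cols A)"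
  proof (rule ccontr)
    assume "\<not> distinct (cols A)"
    then obtain i j where ij: "i < nc" "j < nc" "i \<noteq> j" "col A i = col A j"
      using A unfolding distinct_conv_nth by auto
    define v :: "'a vec" where "v = unit_vec nc i - unit_vec nc j"
    have "A *\<^sub>v v = col A i - col A j"
      unfolding v_def using A ij by (simp add: mult_minus_distrib_mat_vec mult_unit_vec_col)
    also have "\<dots> = 0\<^sub>v n" using ij(4) A by auto
    finally have "A *\<^sub>v v = 0\<^sub>v n" .
    moreover have "v \<in> carrier_vec nc" unfolding v_def by simp
    ultimately have "v = 0\<^sub>v nc" by (rule ker[rotated])
    moreover have "v $ i = 1" unfolding v_def using ij by simp
    ultimately show False using ij(1) by simp
  qed
  have "\<not> lin_dep (set (cols A))"
  proof
    assume "lin_dep (set (cols A))"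
    from lin_depE[OF A this dist] obtain v
      where "v \<in> carrier_vec nc" "v \<noteq> 0\<^sub>v nc" "A *\<^sub>v v = 0\<^sub>v n" .
    then show False using ker by blast
  qed
  then show ?thesis by (rule lin_indpt_full_rank[OF A dist])
qed

lemma (in vec_space) full_rank_cols_lin_indpt:
  fixes A :: "'a mat"
  assumes A: "A \<in> carrier_mat n nc" and r: "rank A = nc"
  shows "distinct (cols A)" and "lin_indpt (set (cols A))"
proof -
  obtain S where S: "maximal S (\<lambda>T. T \<subseteq> set (cols A) \<and> lin_indpt T)"
    using maximal_exists[of "\<lambda>T. T \<subseteq> set (cols A) \<and> lin_indpt T" "card (set (cols A))" "{}"]
    by (meson List.finite_set card_mono empty_iff empty_subsetI finite_lin_indpt2 rev_finite_subset)
  then have "card S \<le> card (set (cols A))" by (simp add: card_mono maximal_def)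
  then have "nc \<le> card (set (cols A))" using rank_card_indpt[OF A S] r by simp
  moreover have "card (set (cols A)) \<le> length (cols A)" "length (cols A) = nc"
    using A card_length[of "cols A"] by simp_all
  ultimately have "card (set (cols A)) = length (cols A)" by linarith
  then show dist: "distinct (cols A)" by (rule card_distinct)
  show "lin_indpt (set (cols A))" by (rule full_rank_lin_indpt[OF A r dist])
qed

lemma (in vec_space) lin_indpt_extends_to_basis:
  fixes A :: "'a vec set"
  assumes A: "A \<subseteq> carrier_vec n" and li: "lin_indpt A"
  obtains B where "A \<subseteq> B" "finite B" "basis B" "card B = n"
proof -
  let ?P = "\<lambda>S. A \<subseteq> S \<and> S \<subseteq> carrier_vec n \<and> lin_indpt S"
  have bound: "finite S \<and> card S \<le> n" if "?P S" for S
    using li_le_dim[of S] that by (auto simp: fin_dim dim_is_n)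
  have "?P A" using A li by simp
  then obtain B where B: "finite B" "maximal B ?P" using maximal_exists[of ?P n A, OF bound] by blast
  then have PB: "?P B" unfolding maximal_def by blast
  have "maximal B (\<lambda>S. S \<subseteq> carrier_vec n \<and> lin_indpt S)"
    unfolding maximal_def
  proof (intro conjI allI impI)
    show "B \<subseteq> carrier_vec n" "lin_indpt B" using PB by auto
    fix C assume C: "B \<subseteq> C \<and> C \<subseteq> carrier_vec n \<and> lin_indpt C"
    then have "?P C" using PB by auto
    then show "C = B" using B(2) C unfolding maximal_def by auto
  qed
  then have "basis B" by (rule max_li_is_basis)
  moreover have "card B = n" using dim_basis[OF B(1) \<open>basis B\<close>] dim_is_n by simp
  ultimately show thesis using that PB B(1) by blast
qed

lemma invertible_mat_if_cols_lin_indpt: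
  assumes T: "(T :: 'a :: field mat) \<in> carrier_mat n n" and "distinct (cols T)"
    and "module.lin_indpt class_ring (module_vec TYPE('a) n) (set (cols T))"
  shows "invertible_mat T"
proof -
  interpret vec_space "TYPE('a)" n .
  have "rank T = n" by (rule lin_indpt_full_rank[OF T assms(2,3)])
  then show ?thesis using invertible_mat_if_det_nonzero[OF T] det_rank_iff[OF T] by simp
qed

lemma full_rank_extends_to_invertible:
  fixes T1 :: "real mat"
  assumes T1: "T1 \<in> carrier_mat n k" and kn: "k \<le> n" and rank: "vec_space.rank n T1 = k"
  obtains T where "T \<in> carrier_mat n n" "invertible_mat T" "T * inclusion_mat k (n - k) = T1"
proof -
  interpret vec_space "TYPE(real)" n .
  note cols_T1 = full_rank_cols_lin_indpt[OF T1 rank]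
  have "set (cols T1) \<subseteq> carrier_vec n" using T1 cols_dim by blast
  then obtain B where B: "set (cols T1) \<subseteq> B" "finite B" "basis B" "card B = n"
    using lin_indpt_extends_to_basis cols_T1(2) by blast
  obtain xs where xs: "set xs = B - set (cols T1)" "distinct xs"
    using finite_distinct_list[of "B - set (cols T1)"] B(2) by blast
  define L where "L = cols T1 @ xs"
  have "set L = B" "distinct L" unfolding L_def using xs B(1) cols_T1(1) by auto
  then have L: "length L = n" "set L \<subseteq> carrier_vec n" "lin_indpt (set L)"
    using distinct_card[of L] B(3,4) unfolding basis_def by simp_all
  then have "length xs = n - k" using T1 unfolding L_def by simp
  define T where "T = mat_of_cols n L"
  have T: "T \<in> carrier_mat n n" unfolding T_def using mat_of_cols_carrier(1)[of n L] L by simp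
  have inv: "invertible_mat T"
    by (rule invertible_mat_if_cols_lin_indpt[OF T]) (use L \<open>distinct L\<close> in \<open>simp_all add: T_def\<close>)
  have T_hcat: "T = hcat T1 (mat_of_cols n xs)"
    unfolding T_def L_def mat_of_cols_append using mat_of_cols_cols[of T1] T1 by simp
  have "T * inclusion_mat k (n - k) = hcat T1 (mat_of_cols n xs) * inclusion_mat k (length xs)"
    unfolding T_hcat \<open>length xs = n - k\<close> ..
  also have "\<dots> = T1" by (rule hcat_mult_inclusion_mat[OF T1 mat_of_cols_carrier(1)])
  finally show thesis by (rule that[OF T inv])
qed

lemma rank_invertible_mult_inclusion_mat:
  fixes T :: "real mat"
  assumes T: "T \<in> carrier_mat n n" "invertible_mat T" and kn: "k \<le> n"
  shows "vec_space.rank n (T * inclusion_mat k (n - k)) = k"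
proof -
  let ?E = "inclusion_mat k (n - k) :: real mat"
  have E: "?E \<in> carrier_mat n k" using inclusion_mat_carrier[of k "n - k"] kn by simp
  show ?thesis
  proof (rule rank_eq_dim_col_if_kernel_trivial)
    show "T * ?E \<in> carrier_mat n k" using T E by simp
    fix v assume v: "v \<in> carrier_vec k" and "(T * ?E) *\<^sub>v v = 0\<^sub>v n"
    then have TEv: "T *\<^sub>v (?E *\<^sub>v v) = 0\<^sub>v n" using T E by simp
    have "?E *\<^sub>v v = (minv T * T) *\<^sub>v (?E *\<^sub>v v)" using minv_mult_mat[OF T] E v by simp
    also have "\<dots> = minv T *\<^sub>v (T *\<^sub>v (?E *\<^sub>v v))"
      using minv_carrier_mat[OF T] T E v by simp
    also have "\<dots> = minv T *\<^sub>v 0\<^sub>v n" unfolding TEv ..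
    also have "\<dots> = 0\<^sub>v n"
      using minv_carrier_mat[OF T] by (auto intro!: eq_vecI simp: scalar_prod_def)
    finally have Ev: "v @\<^sub>v 0\<^sub>v (n - k) = 0\<^sub>v n" using inclusion_mat_mult_vec[OF v] by simp
    show "v = 0\<^sub>v k"
    proof (rule eq_vecI)
      fix i assume "i < dim_vec (0\<^sub>v k)"
      then have i: "i < k" by simp
      then have "v $ i = (v @\<^sub>v 0\<^sub>v (n - k)) $ i" using v by simp
      also have "\<dots> = 0" unfolding Ev using i kn by simp
      finally show "v $ i = 0\<^sub>v k $ i" using i by simp
    qed (use v in simp)
  qed
qed

lemma ex_invertible_iff_ex_full_rank:
  fixes P :: "real mat \<Rightarrow> bool"
  assumes kn: "k \<le> n"
  shows "(\<exists>T. T \<in> carrier_mat n n \<and> invertible_mat T \<and> P (T * inclusion_mat k (n - k)))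
     \<longleftrightarrow> (\<exists>T1 \<in> carrier_mat n k. vec_space.rank n T1 = k \<and> P T1)"
proof
  assume "\<exists>T. T \<in> carrier_mat n n \<and> invertible_mat T \<and> P (T * inclusion_mat k (n - k))"
  then obtain T where T: "T \<in> carrier_mat n n" "invertible_mat T"
    and P: "P (T * inclusion_mat k (n - k))" by blast
  have "inclusion_mat k (n - k) \<in> carrier_mat n k" using inclusion_mat_carrier[of k "n - k"] kn by simp
  then have "T * inclusion_mat k (n - k) \<in> carrier_mat n k" by (rule mult_carrier_mat[OF T(1)])
  then show "\<exists>T1 \<in> carrier_mat n k. vec_space.rank n T1 = k \<and> P T1"
    using rank_invertible_mult_inclusion_mat[OF T kn] P by blast
next
  assume "\<exists>T1 \<in> carrier_mat n k. vec_space.rank n T1 = k \<and> P T1"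
  then obtain T1 where T1: "T1 \<in> carrier_mat n k" "vec_space.rank n T1 = k" and P: "P T1" by blast
  obtain T where T: "T \<in> carrier_mat n n" "invertible_mat T" and TE: "T * inclusion_mat k (n - k) = T1"
    by (rule full_rank_extends_to_invertible[OF T1(1) kn T1(2)])
  have "P (T * inclusion_mat k (n - k))" unfolding TE by (rule P)
  then show "\<exists>T. T \<in> carrier_mat n n \<and> invertible_mat T \<and> P (T * inclusion_mat k (n - k))"
    using T by blast
qed

lemma block_diag_conjugate_equation_iff:
  assumes T: "T \<in> carrier_mat n n" "invertible_mat T"
    and M: "M \<in> carrier_mat (n + p) (n + q)" and X: "X \<in> carrier_mat n k"
    and \<Xi>: "\<Xi> \<in> carrier_mat k k" and PiM: "PiM \<in> carrier_mat q k" and \<Gamma>: "\<Gamma> \<in> carrier_mat p k"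
  shows "block_diag_id (minv T) n p * M * block_diag_id T n q * (X @\<^sub>r PiM) = (X * \<Xi>) @\<^sub>r \<Gamma>
     \<longleftrightarrow> M * ((T * X) @\<^sub>r PiM) = (T * X * \<Xi>) @\<^sub>r \<Gamma>"
proof -
  let ?D = "block_diag_id (minv T) n p"
  have T': "minv T \<in> carrier_mat n n" by (rule minv_carrier_mat[OF T])
  have D: "?D \<in> carrier_mat (n + p) (n + p)" using T' by simp
  have TX: "T * X \<in> carrier_mat n k" using T X by simp
  have DT: "block_diag_id T n q \<in> carrier_mat (n + q) (n + q)" using T by simp
  have XPi: "X @\<^sub>r PiM \<in> carrier_mat (n + q) k" using X PiM by simp
  have "?D * M * block_diag_id T n q * (X @\<^sub>r PiM) = ?D * (M * (block_diag_id T n q * (X @\<^sub>r PiM)))"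
    unfolding assoc_mult_mat[OF mult_carrier_mat[OF D M] DT XPi]
    by (rule assoc_mult_mat[OF D M mult_carrier_mat[OF DT XPi]])
  also have "block_diag_id T n q * (X @\<^sub>r PiM) = (T * X) @\<^sub>r PiM"
    by (rule block_diag_id_mult_append_rows[OF T(1) X PiM])
  finally have lhs: "?D * M * block_diag_id T n q * (X @\<^sub>r PiM) = ?D * (M * ((T * X) @\<^sub>r PiM))" .
  have "minv T * (T * X * \<Xi>) = (minv T * T) * (X * \<Xi>)"
    using T' T X \<Xi> by (simp add: assoc_mult_mat[of "minv T" n n T n "X * \<Xi>" k])
  then have rhs: "(X * \<Xi>) @\<^sub>r \<Gamma> = ?D * ((T * X * \<Xi>) @\<^sub>r \<Gamma>)"
    using block_diag_id_mult_append_rows[OF T', of "T * X * \<Xi>" k \<Gamma> p] TX \<Xi> \<Gamma> X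
      minv_mult_mat[OF T] by simp
  have Y: "M * ((T * X) @\<^sub>r PiM) \<in> carrier_mat (n + p) k"
    by (rule mult_carrier_mat[OF M carrier_append_rows[OF TX PiM]])
  have Z: "(T * X * \<Xi>) @\<^sub>r \<Gamma> \<in> carrier_mat (n + p) k"
    by (rule carrier_append_rows[OF mult_carrier_mat[OF TX \<Xi>] \<Gamma>])
  show ?thesis
    unfolding lhs rhs
    by (rule mult_left_cancel_mat[OF D block_diag_id_carrier[OF T(1)] block_diag_id_minv(1)[OF T] Y Z])
qed

lemma conjugated_tangential_block_form_iff:
  assumes T: "T \<in> carrier_mat (k + r) (k + r)" "invertible_mat T"
    and M: "M \<in> carrier_mat (k + r + p) (k + r + q)"
    and \<Xi>: "\<Xi> \<in> carrier_mat k k" and PiM: "PiM \<in> carrier_mat q k" and \<Gamma>: "\<Gamma> \<in> carrier_mat p k"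
  shows "(\<exists>G Z S F K H. G \<in> carrier_mat k q \<and> Z \<in> carrier_mat k r \<and> S \<in> carrier_mat r q \<and>
            F \<in> carrier_mat r r \<and> K \<in> carrier_mat p q \<and> H \<in> carrier_mat p r \<and>
            M = block_diag_id T (k + r) p * tangential_block_mat \<Xi> PiM \<Gamma> G Z S F K H
                * block_diag_id (minv T) (k + r) q)
     \<longleftrightarrow> M * ((T * inclusion_mat k r) @\<^sub>r PiM) = (T * inclusion_mat k r * \<Xi>) @\<^sub>r \<Gamma>"
proof -
  let ?N = "block_diag_id (minv T) (k + r) p * M * block_diag_id T (k + r) q"
  have N: "?N \<in> carrier_mat (k + r + p) (k + r + q)"
    using mult_carrier_mat[OF mult_carrier_mat[OF block_diag_id_carrier[OF minv_carrier_mat[OF T]] M]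
        block_diag_id_carrier[OF T(1)]] .
  have "(\<exists>G Z S F K H. G \<in> carrier_mat k q \<and> Z \<in> carrier_mat k r \<and> S \<in> carrier_mat r q \<and>
            F \<in> carrier_mat r r \<and> K \<in> carrier_mat p q \<and> H \<in> carrier_mat p r \<and>
            M = block_diag_id T (k + r) p * tangential_block_mat \<Xi> PiM \<Gamma> G Z S F K H
                * block_diag_id (minv T) (k + r) q)
      \<longleftrightarrow> (\<exists>G Z S F K H. G \<in> carrier_mat k q \<and> Z \<in> carrier_mat k r \<and> S \<in> carrier_mat r q \<and>
            F \<in> carrier_mat r r \<and> K \<in> carrier_mat p q \<and> H \<in> carrier_mat p r \<and>
            ?N = tangential_block_mat \<Xi> PiM \<Gamma> G Z S F K H)"
    by (intro ex_cong1 conj_cong refl conjugate_eq_iff[OF _ _ block_diag_id_minv(1,2)[OF T] _ _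
          block_diag_id_minv(2,1)[OF T] M] tangential_block_mat_carrier[OF \<Xi> PiM \<Gamma>])
      (simp_all add: minv_carrier_mat[OF T] T(1))
  also have "\<dots> \<longleftrightarrow> ?N * (inclusion_mat k r @\<^sub>r PiM) = (inclusion_mat k r * \<Xi>) @\<^sub>r \<Gamma>"
    by (rule tangential_block_form_iff[OF N \<Xi> PiM \<Gamma>])
  also have "\<dots> \<longleftrightarrow> M * ((T * inclusion_mat k r) @\<^sub>r PiM) = (T * inclusion_mat k r * \<Xi>) @\<^sub>r \<Gamma>"
    by (rule block_diag_conjugate_equation_iff[OF T M inclusion_mat_carrier \<Xi> PiM \<Gamma>])
  finally show ?thesis .
qed

lemma consistent_iff_tangential_equation:
  assumes M: "M \<in> carrier_mat (n + p) (n + q)" and kn: "k \<le> n"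
    and \<Xi>: "\<Xi> \<in> carrier_mat k k" and PiM: "PiM \<in> carrier_mat q k" and \<Gamma>: "\<Gamma> \<in> carrier_mat p k"
  shows "consistent M n q p k \<Xi> PiM \<Gamma> \<longleftrightarrow>
    (\<exists>T1 \<in> carrier_mat n k. vec_space.rank n T1 = k \<and> M * (T1 @\<^sub>r PiM) = (T1 * \<Xi>) @\<^sub>r \<Gamma>)"
proof -
  obtain r where n: "n = k + r" using le_iff_add kn by blast
  have "consistent M n q p k \<Xi> PiM \<Gamma> \<longleftrightarrow>
      (\<exists>T. T \<in> carrier_mat n n \<and> invertible_mat T \<and>
        (\<exists>G Z S F K H. G \<in> carrier_mat k q \<and> Z \<in> carrier_mat k r \<and> S \<in> carrier_mat r q \<and>
            F \<in> carrier_mat r r \<and> K \<in> carrier_mat p q \<and> H \<in> carrier_mat p r \<and>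
            M = block_diag_id T (k + r) p * tangential_block_mat \<Xi> PiM \<Gamma> G Z S F K H
                * block_diag_id (minv T) (k + r) q))"
    unfolding consistent_def block_diag_id_def[symmetric] tangential_block_mat_def[symmetric] n
    by (simp only: ex_simps add_diff_cancel_left')
  also have "\<dots> \<longleftrightarrow> (\<exists>T. T \<in> carrier_mat n n \<and> invertible_mat T \<and>
      M * ((T * inclusion_mat k (n - k)) @\<^sub>r PiM) = (T * inclusion_mat k (n - k) * \<Xi>) @\<^sub>r \<Gamma>)"
    unfolding n add_diff_cancel_left'
    by (intro ex_cong1 conj_cong refl conjugated_tangential_block_form_iff[OF _ _ M[unfolded n] \<Xi> PiM \<Gamma>])
  also have "\<dots> \<longleftrightarrow>
      (\<exists>T1 \<in> carrier_mat n k. vec_space.rank n T1 = k \<and> M * (T1 @\<^sub>r PiM) = (T1 * \<Xi>) @\<^sub>r \<Gamma>)"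
    by (rule ex_invertible_iff_ex_full_rank[OF kn, where P = "\<lambda>X. M * (X @\<^sub>r PiM) = (X * \<Xi>) @\<^sub>r \<Gamma>"])
  finally show ?thesis .
qed

lemma sys_mat_carrier:
  assumes "Axx \<in> carrier_mat mx mx" "Bxu \<in> carrier_mat mx mu" "Bxv \<in> carrier_mat mx mv"
    "Cyx \<in> carrier_mat my mx" "Czx \<in> carrier_mat mz mx" "Dzu \<in> carrier_mat mz mu"
    "Dyu \<in> carrier_mat my mu" "Dyv \<in> carrier_mat my mv"
  shows "sys_mat Axx Bxu Bxv Cyx Czx Dzu Dzv Dyu Dyv mv P m\<theta> \<theta> \<in> carrier_mat (mx + my) (mx + mu)"
proof -
  have "dim_col (hcat Czx Dzu) = mx + mu" using hcat_carrier_mat[OF assms(5,6)] by simp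
  then show ?thesis using assms unfolding sys_mat_def by (intro carrier_matI) auto
qed

theorem theorem2:
  fixes mx mu my mv mz m\<theta> m\<xi> :: nat
    and Axx Bxu Bxv Cyx Czx Dzu Dzv Dyu Dyv \<Xi> PiM \<Gamma> :: "real mat"
    and P :: "nat \<Rightarrow> real mat"
    and \<Theta> :: "(nat \<Rightarrow> real) set"
    and \<theta> :: "nat \<Rightarrow> real"
  assumes dims: "mx \<ge> 1" "mu \<ge> 1" "my \<ge> 1" "mv \<ge> 1" "mz \<ge> 1" "m\<theta> \<ge> 1" "m\<xi> \<ge> 1"
    and Axx: "Axx \<in> carrier_mat mx mx" and Bxu: "Bxu \<in> carrier_mat mx mu"
    and Bxv: "Bxv \<in> carrier_mat mx mv" and Cyx: "Cyx \<in> carrier_mat my mx"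
    and Czx: "Czx \<in> carrier_mat mz mx" and Dzu: "Dzu \<in> carrier_mat mz mu"
    and Dzv: "Dzv \<in> carrier_mat mz mv" and Dyu: "Dyu \<in> carrier_mat my mu"
    and Dyv: "Dyv \<in> carrier_mat my mv"
    and P: "\<And>i. i \<le> m\<theta> \<Longrightarrow> P i \<in> carrier_mat mv mz"
    and \<Theta>_dom: "\<And>th i. th \<in> \<Theta> \<Longrightarrow> i = 0 \<or> m\<theta> < i \<Longrightarrow> th i = 0"
    and \<Theta>_compact: "compact \<Theta>"
    and \<Theta>_inv: "\<And>th. th \<in> \<Theta> \<Longrightarrow> invertible_mat (1\<^sub>m mv - Ptheta P m\<theta> th * Dzv)"
    and \<Xi>: "\<Xi> \<in> carrier_mat m\<xi> m\<xi>" and PiM: "PiM \<in> carrier_mat mu m\<xi>"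
    and \<Gamma>: "\<Gamma> \<in> carrier_mat my m\<xi>"
    and mx_ge: "mx \<ge> m\<xi>"
    and \<theta>: "\<theta> \<in> \<Theta>"
  shows "consistent (sys_mat Axx Bxu Bxv Cyx Czx Dzu Dzv Dyu Dyv mv P m\<theta> \<theta>) mx mu my m\<xi> \<Xi> PiM \<Gamma>
     \<longleftrightarrow> (\<exists>T1 \<in> carrier_mat mx m\<xi>. vec_space.rank mx T1 = m\<xi> \<and>
            sys_mat Axx Bxu Bxv Cyx Czx Dzu Dzv Dyu Dyv mv P m\<theta> \<theta> * (T1 @\<^sub>r PiM) = (T1 * \<Xi>) @\<^sub>r \<Gamma>)"
  by (rule consistent_iff_tangential_equation[OF
        sys_mat_carrier[OF Axx Bxu Bxv Cyx Czx Dzu Dyu Dyv] mx_ge \<Xi> PiM \<Gamma>])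

end
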